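(* Let $N\ge3$, suppose $\boldsymbol{\mathfrak h}\notin\mathrm{col}(C)$, let $\mathbf p=\mathrm{proj}_{\ker(C)}\boldsymbol{\mathfrak h}$ (orthogonal projection), $\gamma_{\max}=\|\mathbf p\|_\infty^{-1}$, and let $\gamma\in\mathbb{R}$ with $0<|\gamma|\le\gamma_{\max}$. Set $\tilde{\boldsymbol{\mathfrak b}}=\gamma\mathbf p$ and $\boldsymbol\theta=\tfrac12\arccos\tilde{\boldsymbol{\mathfrak b}}$ (entrywise). Then the dephasing code associated with $\boldsymbol\theta$ satisfies $PSP\in\mathbb{R}P$ for all $S\in\mathfrak{S}$, and $PHP=\tfrac{\gamma}{2}\|\mathbf p\|_2^2\,Z_L\not\propto P$. Moreover, if $\ker(C)$ is one-dimensional and $\gamma=\gamma_{\max}$, then $\tilde{\boldsymbol{\mathfrak b}}$ is an optimal solution of the problem: maximize $\boldsymbol{\mathfrak b}\cdot\boldsymbol{\mathfrak h}$ subject to $\|\boldsymbol{\mathfrak b}\|_\infty\le1$, $\boldsymbol{\mathfrak b}\perp\mathrm{col}(C)$.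
   Context: Qubits $1,\dots,N$; $Z_j$, $X_j$ denote the Pauli $Z$, $X$ operators on qubit $j$ of $(\mathbb{C}^2)^{\otimes N}$. For $\mathbf v\in\mathbb{R}^N$, $\mathbf v\cdot\mathbf Z:=\sum_j v_jZ_j$. Dephasing model: $\boldsymbol{\mathfrak h}\in\mathbb{R}^N$, $H=\tfrac12\boldsymbol{\mathfrak h}\cdot\mathbf Z$; $C$ is a real symmetric positive semidefinite $N\times N$ matrix with orthonormal eigenvectors $\mathbf v_1,\dots,\mathbf v_N$ and eigenvalues $\lambda_1,\dots,\lambda_N\ge0$; $L_j=\sqrt{\lambda_j}\,\mathbf v_j\cdot\mathbf Z$; $\mathrm{col}(C),\ker(C)$ are column space and kernel of $C$; the Lindblad span $\mathfrak{S}$ is the real span of $I$, all $L_i$ and all $L_iL_j$. Dephasing code for $\boldsymbol\theta\in\mathbb{R}^N$: $|0_L\rangle=\bigotimes_{j=1}^N(\cos\theta_j|0\rangle+i\sin\theta_j|1\rangle)$, $|1_L\rangle=X^{\otimes N}|0_L\rangle$, $P=|0_L\rangle\langle0_L|+|1_L\rangle\langle1_L|$, $Z_L=|0_L\rangle\langle0_L|-|1_L\rangle\langle1_L|$. *)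

theory Defs
  imports "Jordan_Normal_Form.Matrix_Kernel"
begin

(* Computational basis of (C^2)^{\<otimes>N}: basis state x < 2^N, qubit j (0-indexed, j < N)
   is in state |1> iff bit j of x is set. *)
definition qbit :: "nat \<Rightarrow> nat \<Rightarrow> bool" where
  "qbit x j = odd (x div 2 ^ j)"

definition Zq :: "nat \<Rightarrow> nat \<Rightarrow> complex mat" where
  "Zq N j = mat (2^N) (2^N) (\<lambda>(x, y). if x = y then (if qbit x j then -1 else 1) else 0)"

definition Xall :: "nat \<Rightarrow> complex mat" where
  "Xall N = mat (2^N) (2^N) (\<lambda>(x, y). if (\<forall>j<N. qbit x j \<noteq> qbit y j) then 1 else 0)"

fun msum :: "nat \<Rightarrow> (nat \<Rightarrow> complex mat) \<Rightarrow> nat \<Rightarrow> complex mat" where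
  "msum d f 0 = 0\<^sub>m d d"
| "msum d f (Suc k) = msum d f k + f k"

definition dotZ :: "nat \<Rightarrow> real vec \<Rightarrow> complex mat" where
  "dotZ N v = msum (2^N) (\<lambda>j. complex_of_real (v $ j) \<cdot>\<^sub>m Zq N j) N"

definition ketbra :: "complex vec \<Rightarrow> complex vec \<Rightarrow> complex mat" where
  "ketbra u w = mat (dim_vec u) (dim_vec w) (\<lambda>(i, j). u $ i * cnj (w $ j))"

definition ket0L :: "nat \<Rightarrow> real vec \<Rightarrow> complex vec" where
  "ket0L N \<theta> = vec (2^N) (\<lambda>x. \<Prod>j<N. if qbit x j then \<i> * complex_of_real (sin (\<theta> $ j))
                                              else complex_of_real (cos (\<theta> $ j)))"

definition ket1L :: "nat \<Rightarrow> real vec \<Rightarrow> complex vec" where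
  "ket1L N \<theta> = Xall N *\<^sub>v ket0L N \<theta>"

definition codeP :: "nat \<Rightarrow> real vec \<Rightarrow> complex mat" where
  "codeP N \<theta> = ketbra (ket0L N \<theta>) (ket0L N \<theta>) + ketbra (ket1L N \<theta>) (ket1L N \<theta>)"

definition codeZL :: "nat \<Rightarrow> real vec \<Rightarrow> complex mat" where
  "codeZL N \<theta> = ketbra (ket0L N \<theta>) (ket0L N \<theta>) - ketbra (ket1L N \<theta>) (ket1L N \<theta>)"

definition lindblad_span :: "nat \<Rightarrow> (nat \<Rightarrow> complex mat) \<Rightarrow> complex mat set" where
  "lindblad_span N L = {complex_of_real a \<cdot>\<^sub>m 1\<^sub>m (2^N)
        + msum (2^N) (\<lambda>i. complex_of_real (b i) \<cdot>\<^sub>m L i) N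
        + msum (2^N) (\<lambda>i. msum (2^N) (\<lambda>j. complex_of_real (c i j) \<cdot>\<^sub>m (L i * L j)) N) N
      | a b c. True}"

definition colspace :: "real mat \<Rightarrow> real vec set" where
  "colspace C = {C *\<^sub>v x | x. x \<in> carrier_vec (dim_col C)}"

definition is_orth_proj :: "real vec set \<Rightarrow> real vec \<Rightarrow> real vec \<Rightarrow> bool" where
  "is_orth_proj K h p \<longleftrightarrow> p \<in> K \<and> (\<forall>w\<in>K. (h - p) \<bullet> w = 0)"

definition linf_norm :: "real vec \<Rightarrow> real" where
  "linf_norm p = Max ((\<lambda>i. \<bar>p $ i\<bar>) ` {0..<dim_vec p})"

end

theory Submission
  imports Defs
begin

text \<open>
  The Hamiltonian and every operator of the Lindblad span are diagonal in the computational basis,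
  and the code states are product states with \<open>|1\<^sub>L\<rangle> = X\<^sup>\<otimes>\<^sup>N|0\<^sub>L\<rangle>\<close>. Hence the matrix
  elements of a string \<open>Z\<^sub>K = \<Prod>\<^sub>j\<^sub>\<in>\<^sub>K Z\<^sub>j\<close> between code states factor over the qubits:
  \<open>\<langle>s\<^sub>L|Z\<^sub>K|s\<^sub>L\<rangle> = \<Prod>\<^sub>j\<^sub>\<in>\<^sub>K \<plusminus>cos 2\<theta>\<^sub>j\<close>, while \<open>\<langle>0\<^sub>L|Z\<^sub>K|1\<^sub>L\<rangle>\<close> vanishes as soon as one
  qubit lies outside \<open>K\<close>, which for \<open>|K| \<le> 2 < N\<close> is always the case. With
  \<open>cos 2\<theta>\<^sub>j = \<gamma> p\<^sub>j\<close> and \<open>p \<in> ker C\<close>, every \<open>L\<^sub>i\<close> has expectation \<open>\<plusminus>\<gamma>\<surd>\<lambda>\<^sub>i (v\<^sub>i\<cdot>p) = 0\<close>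
  in both code states, and products \<open>L\<^sub>iL\<^sub>j\<close> are sums of strings of even length, whose two
  expectations agree; so \<open>PSP \<in> \<real>P\<close>. For \<open>H\<close> the two expectations are
  \<open>\<plusminus>(\<gamma>/2)(h\<cdot>p) = \<plusminus>(\<gamma>/2)\<parallel>p\<parallel>\<^sup>2\<close>, which gives a nonzero multiple of \<open>Z\<^sub>L\<close>.
  Finally, a feasible \<open>b\<close> lies in \<open>col(C)\<^sup>\<perp> = ker C\<close>; if this is a line, \<open>b = t p\<close> with
  \<open>|t| \<parallel>p\<parallel>\<^sub>\<infinity> \<le> 1\<close>, and \<open>b\<cdot>h = t \<parallel>p\<parallel>\<^sup>2\<close> is largest for \<open>t = 1/\<parallel>p\<parallel>\<^sub>\<infinity>\<close>.
\<close>

section \<open>Bit strings\<close>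

lemma qbit_Suc: "qbit x (Suc j) = qbit (x div 2) j"
  by (simp add: qbit_def div_mult2_eq)

lemma sum_lessThan_double:
  fixes f :: "nat \<Rightarrow> 'a::comm_monoid_add"
  shows "(\<Sum>x<2*m. f x) = (\<Sum>y<m. f (2*y) + f (2*y+1))"
  by (induction m) (simp_all add: add_ac)

lemma sum_prod_qbit:
  fixes g :: "nat \<Rightarrow> bool \<Rightarrow> 'a::comm_semiring_1"
  shows "(\<Sum>x<2^N. \<Prod>j<N. g j (qbit x j)) = (\<Prod>j<N. g j False + g j True)"
proof (induction N arbitrary: g)
  case 0
  then show ?case by simp
next
  case (Suc N)
  have split: "(\<Prod>j<Suc N. g j (qbit x j)) = g 0 (odd x) * (\<Prod>j<N. g (Suc j) (qbit (x div 2) j))" for x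
    by (simp only: prod.lessThan_Suc_shift qbit_Suc) (simp add: qbit_def)
  have "(\<Sum>x<2^Suc N. \<Prod>j<Suc N. g j (qbit x j))
      = (g 0 False + g 0 True) * (\<Sum>y<2^N. \<Prod>j<N. g (Suc j) (qbit y j))"
    unfolding split power_Suc sum_lessThan_double
    by (simp add: sum.distrib sum_distrib_left algebra_simps)
  also have "\<dots> = (\<Prod>j<Suc N. g j False + g j True)"
    using Suc[of "\<lambda>j. g (Suc j)"] by (simp only: prod.lessThan_Suc_shift)
  finally show ?case .
qed

lemma qbit_eqI:
  assumes "x < 2^N" "y < 2^N" "\<And>j. j < N \<Longrightarrow> qbit x j = qbit y j"
  shows "x = y"
  using assms
proof (induction N arbitrary: x y)
  case 0
  then show ?case by simp
next
  case (Suc N)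
  have "x div 2 = y div 2"
    using Suc.prems by (intro Suc.IH) (auto simp flip: qbit_Suc)
  moreover have "odd x = odd y"
    using Suc.prems(3)[of 0] by (simp add: qbit_def)
  ultimately show ?case
    by (metis div_mult_mod_eq odd_iff_mod_2_eq_one parity_cases)
qed

definition qbit_complement :: "nat \<Rightarrow> nat \<Rightarrow> nat" where
  "qbit_complement N x = 2^N - 1 - x"

lemma qbit_complement_less: "x < 2^N \<Longrightarrow> qbit_complement N x < 2^N"
  by (simp add: qbit_complement_def)

lemma qbit_qbit_complement:
  "x < 2^N \<Longrightarrow> j < N \<Longrightarrow> qbit (qbit_complement N x) j = (\<not> qbit x j)"
proof (induction N arbitrary: x j)
  case 0
  then show ?case by simp
next
  case (Suc N)
  have complement_Suc:
    "qbit_complement (Suc N) x = 2 * qbit_complement N (x div 2) + (if odd x then 0 else 1)"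
    using Suc.prems unfolding qbit_complement_def
    by (cases "odd x") (auto elim!: oddE evenE simp: algebra_simps)
  show ?case
  proof (cases j)
    case 0
    then show ?thesis by (simp add: complement_Suc qbit_def)
  next
    case (Suc i)
    then show ?thesis
      using Suc.IH[of "x div 2" i] Suc.prems by (simp add: complement_Suc qbit_Suc)
  qed
qed

lemma Xall_entry_iff:
  assumes "x < 2^N" "y < 2^N"
  shows "(\<forall>j<N. qbit x j \<noteq> qbit y j) \<longleftrightarrow> y = qbit_complement N x"
  using qbit_eqI[of y N "qbit_complement N x"] qbit_qbit_complement[of x N]
    qbit_complement_less[of x N] assms
  by auto

section \<open>Diagonal and rank-one matrices\<close>

definition real_diag :: "nat \<Rightarrow> (nat \<Rightarrow> real) \<Rightarrow> complex mat" where
  "real_diag n f = mat n n (\<lambda>(x, y). if x = y then of_real (f x) else 0)"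

definition outer :: "nat \<Rightarrow> (nat \<Rightarrow> complex) \<Rightarrow> (nat \<Rightarrow> complex) \<Rightarrow> complex mat" where
  "outer n a b = mat n n (\<lambda>(i, j). a i * cnj (b j))"

definition braket_diag :: "nat \<Rightarrow> (nat \<Rightarrow> complex) \<Rightarrow> (nat \<Rightarrow> real) \<Rightarrow> (nat \<Rightarrow> complex) \<Rightarrow> complex" where
  "braket_diag n u f w = (\<Sum>x<n. cnj (u x) * of_real (f x) * w x)"

lemma real_diag_carrier [simp]: "real_diag n f \<in> carrier_mat n n"
  by (simp add: real_diag_def)

lemma outer_carrier [simp]: "outer n a b \<in> carrier_mat n n"
  by (simp add: outer_def)

lemma real_diag_dim [simp]: "dim_row (real_diag n f) = n" "dim_col (real_diag n f) = n"
  by (simp_all add: real_diag_def)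

lemma outer_dim [simp]: "dim_row (outer n a b) = n" "dim_col (outer n a b) = n"
  by (simp_all add: outer_def)

lemma one_mat_real_diag: "1\<^sub>m n = real_diag n (\<lambda>_. 1)"
  by (rule eq_matI) (auto simp: real_diag_def)

lemma smult_real_diag: "of_real c \<cdot>\<^sub>m real_diag n f = real_diag n (\<lambda>x. c * f x)"
  by (rule eq_matI) (auto simp: real_diag_def)

lemma msum_real_diag: "msum n (\<lambda>i. real_diag n (f i)) k = real_diag n (\<lambda>x. \<Sum>i<k. f i x)"
  by (induction k) (auto intro!: eq_matI simp: real_diag_def)

lemma real_diag_mult: "real_diag n f * real_diag n g = real_diag n (\<lambda>x. f x * g x)"
proof (rule eq_matI)
  fix i j
  assume "i < dim_row (real_diag n (\<lambda>x. f x * g x))" "j < dim_col (real_diag n (\<lambda>x. f x * g x))"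
  then have i: "i < n" and j: "j < n" by (auto simp: real_diag_def)
  have "(real_diag n f * real_diag n g) $$ (i, j)
      = (\<Sum>k\<in>{0..<n}. (if i = k then of_real (f i) else 0) * (if k = j then of_real (g k) else 0))"
    using i j by (simp add: real_diag_def scalar_prod_def)
  also have "\<dots> = (\<Sum>k\<in>{0..<n}. if k = i then (if i = j then of_real (f i * g i) else 0) else 0)"
    by (rule sum.cong) auto
  finally have "(real_diag n f * real_diag n g) $$ (i, j) = (if i = j then of_real (f i * g i) else 0)"
    using i by simp
  then show "(real_diag n f * real_diag n g) $$ (i, j) = real_diag n (\<lambda>x. f x * g x) $$ (i, j)"
    using i j by (simp add: real_diag_def)
qed (auto simp: real_diag_def)

lemma ketbra_vec: "ketbra (vec n a) (vec n b) = outer n a b"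
  unfolding ketbra_def outer_def by (rule eq_matI) auto

lemma outer_real_diag_outer:
  "outer n a b * real_diag n f * outer n c d = braket_diag n b f c \<cdot>\<^sub>m outer n a d"
proof (rule eq_matI)
  fix i j
  assume "i < dim_row (braket_diag n b f c \<cdot>\<^sub>m outer n a d)" "j < dim_col (braket_diag n b f c \<cdot>\<^sub>m outer n a d)"
  then have i: "i < n" and j: "j < n" by (auto simp: outer_def)
  have left: "(outer n a b * real_diag n f) $$ (i, k) = a i * cnj (b k) * of_real (f k)" if "k < n" for k
    using i that by (simp add: outer_def real_diag_def scalar_prod_def if_distrib sum.delta cong: if_cong)
  have "(outer n a b * real_diag n f * outer n c d) $$ (i, j)
      = (\<Sum>k<n. (a i * cnj (b k) * of_real (f k)) * (c k * cnj (d j)))"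
    using i j left by (simp add: outer_def[of n c d] scalar_prod_def lessThan_atLeast0)
  also have "\<dots> = braket_diag n b f c * (a i * cnj (d j))"
    by (simp add: braket_diag_def sum_distrib_left sum_distrib_right mult_ac)
  finally show "(outer n a b * real_diag n f * outer n c d) $$ (i, j) = (braket_diag n b f c \<cdot>\<^sub>m outer n a d) $$ (i, j)"
    using i j by (simp add: outer_def)
qed (auto simp: outer_def)

lemma outer_sum_real_diag_outer_sum:
  "(outer n a a + outer n b b) * real_diag n f * (outer n a a + outer n b b)
   = braket_diag n a f a \<cdot>\<^sub>m outer n a a + braket_diag n a f b \<cdot>\<^sub>m outer n a b
   + braket_diag n b f a \<cdot>\<^sub>m outer n b a + braket_diag n b f b \<cdot>\<^sub>m outer n b b"
proof -
  let ?A = "outer n a a" and ?B = "outer n b b" and ?D = "real_diag n f"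
  have 1: "(?A + ?B) * ?D = ?A * ?D + ?B * ?D"
    by (rule add_mult_distrib_mat[of _ n n]) auto
  have 2: "(?A * ?D + ?B * ?D) * (?A + ?B) = (?A * ?D + ?B * ?D) * ?A + (?A * ?D + ?B * ?D) * ?B"
    by (rule mult_add_distrib_mat[of _ n n]) auto
  have 3: "(?A * ?D + ?B * ?D) * ?A = ?A * ?D * ?A + ?B * ?D * ?A"
    by (rule add_mult_distrib_mat[of _ n n]) auto
  have 4: "(?A * ?D + ?B * ?D) * ?B = ?A * ?D * ?B + ?B * ?D * ?B"
    by (rule add_mult_distrib_mat[of _ n n]) auto
  have "(?A + ?B) * ?D * (?A + ?B) = ?A * ?D * ?A + ?A * ?D * ?B + ?B * ?D * ?A + ?B * ?D * ?B"
    unfolding 1 2 3 4 by (intro eq_matI) (simp_all add: algebra_simps)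
  then show ?thesis
    by (simp only: outer_real_diag_outer)
qed

lemma braket_diag_sum: "braket_diag n u (\<lambda>x. \<Sum>i\<in>A. f i x) w = (\<Sum>i\<in>A. braket_diag n u (f i) w)"
  unfolding braket_diag_def of_real_sum
  by (simp add: sum_distrib_left sum_distrib_right mult_ac sum.swap[of _ A])

lemma braket_diag_scale: "braket_diag n u (\<lambda>x. c * f x) w = of_real c * braket_diag n u f w"
  by (simp add: braket_diag_def sum_distrib_left mult_ac)

lemma braket_diag_self: "braket_diag n u f u = of_real (\<Sum>x<n. (cmod (u x))\<^sup>2 * f x)"
  unfolding braket_diag_def of_real_sum of_real_mult complex_norm_square
  by (simp add: mult_ac)

lemma braket_diag_product:
  "braket_diag (2^N) (\<lambda>x. \<Prod>j<N. U j (qbit x j)) (\<lambda>x. \<Prod>j<N. e j (qbit x j)) (\<lambda>x. \<Prod>j<N. W j (qbit x j))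
   = (\<Prod>j<N. cnj (U j False) * of_real (e j False) * W j False
             + cnj (U j True) * of_real (e j True) * W j True)"
  unfolding braket_diag_def cnj_prod of_real_prod prod.distrib[symmetric]
  by (rule sum_prod_qbit)

lemma quadratic_form_outer:
  "(\<Sum>x<n. \<Sum>y<n. cnj (u x) * (\<alpha> \<cdot>\<^sub>m outer n a a + \<beta> \<cdot>\<^sub>m outer n b b) $$ (x, y) * u y)
   = \<alpha> * (braket_diag n u (\<lambda>_. 1) a * braket_diag n a (\<lambda>_. 1) u)
   + \<beta> * (braket_diag n u (\<lambda>_. 1) b * braket_diag n b (\<lambda>_. 1) u)"
proof -
  have "(\<Sum>x<n. \<Sum>y<n. cnj (u x) * (\<alpha> \<cdot>\<^sub>m outer n a a + \<beta> \<cdot>\<^sub>m outer n b b) $$ (x, y) * u y)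
      = (\<Sum>x<n. \<Sum>y<n. \<alpha> * ((cnj (u x) * a x) * (cnj (a y) * u y))
                       + \<beta> * ((cnj (u x) * b x) * (cnj (b y) * u y)))"
    by (intro sum.cong refl) (simp add: outer_def algebra_simps)
  then show ?thesis
    unfolding braket_diag_def sum_product by (simp add: sum.distrib sum_distrib_left mult_ac)
qed

section \<open>Sandwiches proportional to \<open>P\<close>\<close>

definition scalar_sandwich :: "complex mat \<Rightarrow> complex mat \<Rightarrow> bool" where
  "scalar_sandwich P S \<longleftrightarrow> (\<exists>r::real. P * S * P = of_real r \<cdot>\<^sub>m P)"

lemma scalar_sandwich_zero: "P \<in> carrier_mat n n \<Longrightarrow> scalar_sandwich P (0\<^sub>m n n)"
  unfolding scalar_sandwich_def by (intro exI[of _ 0]) auto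

lemma scalar_sandwich_add:
  assumes P: "P \<in> carrier_mat n n" and S: "S \<in> carrier_mat n n" and T: "T \<in> carrier_mat n n"
    and "scalar_sandwich P S" "scalar_sandwich P T"
  shows "scalar_sandwich P (S + T)"
proof -
  obtain r r' where r: "P * S * P = of_real r \<cdot>\<^sub>m P" and r': "P * T * P = of_real r' \<cdot>\<^sub>m P"
    using assms(4,5) unfolding scalar_sandwich_def by blast
  have "P * (S + T) * P = P * S * P + P * T * P"
    using P S T by (simp add: mult_add_distrib_mat[of _ n n] add_mult_distrib_mat[of _ n n])
  also have "\<dots> = of_real (r + r') \<cdot>\<^sub>m P"
    using P by (simp add: r r' add_smult_distrib_right_mat)
  finally show ?thesis unfolding scalar_sandwich_def by blast
qed

lemma scalar_sandwich_smult:
  assumes P: "P \<in> carrier_mat n n" and S: "S \<in> carrier_mat n n" and "scalar_sandwich P S"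
  shows "scalar_sandwich P (of_real c \<cdot>\<^sub>m S)"
proof -
  obtain r where r: "P * S * P = of_real r \<cdot>\<^sub>m P"
    using assms(3) unfolding scalar_sandwich_def by blast
  have "P * (of_real c \<cdot>\<^sub>m S) * P = of_real c \<cdot>\<^sub>m (of_real r \<cdot>\<^sub>m P)"
    using P S by (simp add: mult_smult_distrib[of _ n n] mult_smult_assoc_mat[of _ n n] r)
  also have "\<dots> = of_real (c * r) \<cdot>\<^sub>m P"
    by (rule eq_matI) auto
  finally have "P * (of_real c \<cdot>\<^sub>m S) * P = of_real (c * r) \<cdot>\<^sub>m P" .
  then show ?thesis unfolding scalar_sandwich_def by blast
qed

lemma msum_carrier: "(\<And>i. i < k \<Longrightarrow> f i \<in> carrier_mat n n) \<Longrightarrow> msum n f k \<in> carrier_mat n n"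
  by (induction k) auto

lemma scalar_sandwich_msum:
  assumes "P \<in> carrier_mat n n"
    and "\<And>i. i < k \<Longrightarrow> f i \<in> carrier_mat n n" "\<And>i. i < k \<Longrightarrow> scalar_sandwich P (f i)"
  shows "scalar_sandwich P (msum n f k)"
  using assms
  by (induction k) (auto intro!: scalar_sandwich_zero scalar_sandwich_add msum_carrier)

lemma lindblad_span_scalar_sandwich:
  assumes P: "P \<in> carrier_mat (2^N) (2^N)"
    and L: "\<And>i. i < N \<Longrightarrow> L i \<in> carrier_mat (2^N) (2^N)"
    and one: "scalar_sandwich P (1\<^sub>m (2^N))"
    and lin: "\<And>i. i < N \<Longrightarrow> scalar_sandwich P (L i)"
    and quad: "\<And>i j. i < N \<Longrightarrow> j < N \<Longrightarrow> scalar_sandwich P (L i * L j)"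
    and S: "S \<in> lindblad_span N L"
  shows "scalar_sandwich P S"
proof -
  obtain a b c where S_eq: "S = of_real a \<cdot>\<^sub>m 1\<^sub>m (2^N)
      + msum (2^N) (\<lambda>i. of_real (b i) \<cdot>\<^sub>m L i) N
      + msum (2^N) (\<lambda>i. msum (2^N) (\<lambda>j. of_real (c i j) \<cdot>\<^sub>m (L i * L j)) N) N"
    using S unfolding lindblad_span_def by blast
  have LL: "L i * L j \<in> carrier_mat (2^N) (2^N)" if "i < N" "j < N" for i j
    using L that by (meson mult_carrier_mat)
  show ?thesis
    unfolding S_eq using P L LL one lin quad
    by (intro scalar_sandwich_add scalar_sandwich_smult scalar_sandwich_msum)
      (auto intro!: msum_carrier add_carrier_mat)
qed

section \<open>Products of Pauli Z operators\<close>

definition qubit_sign :: "nat set \<Rightarrow> nat \<Rightarrow> real" where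
  "qubit_sign K x = (\<Prod>j\<in>K. if qbit x j then -1 else 1)"

lemma qubit_sign_lessThan:
  assumes "K \<subseteq> {..<N}"
  shows "qubit_sign K x = (\<Prod>j<N. if j \<in> K \<and> qbit x j then -1 else 1)"
proof -
  have "qubit_sign K x = (\<Prod>j\<in>{..<N} \<inter> K. if qbit x j then -1 else 1)"
    using assms by (simp add: qubit_sign_def Int_absorb1)
  also have "\<dots> = (\<Prod>j<N. if j \<in> K \<and> qbit x j then -1 else 1)"
    by (subst prod.inter_restrict) (auto intro: prod.cong)
  finally show ?thesis .
qed

lemma qubit_sign_mult:
  "qubit_sign {k} x * qubit_sign {l} x = qubit_sign (if k = l then {} else {k, l}) x"
  by (simp add: qubit_sign_def)

definition zsum :: "nat \<Rightarrow> (nat \<Rightarrow> real) \<Rightarrow> nat \<Rightarrow> real" where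
  "zsum N w x = (\<Sum>k<N. w k * qubit_sign {k} x)"

lemma smult_dotZ: "of_real c \<cdot>\<^sub>m dotZ N v = real_diag (2^N) (zsum N (\<lambda>k. c * v $ k))"
proof -
  have Zq: "Zq N j = real_diag (2^N) (qubit_sign {j})" for j
    by (rule eq_matI) (auto simp: Zq_def real_diag_def qubit_sign_def)
  show ?thesis
    unfolding dotZ_def Zq smult_real_diag msum_real_diag zsum_def[abs_def]
    by (rule eq_matI) (auto simp: real_diag_def sum_distrib_left mult.assoc)
qed

lemma zsum_mult:
  "zsum N w x * zsum N w' x
   = (\<Sum>k<N. \<Sum>l<N. w k * w' l * qubit_sign (if k = l then {} else {k, l}) x)"
  unfolding zsum_def sum_product by (simp add: qubit_sign_mult mult_ac)

section \<open>The dephasing code\<close>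

definition code_factor :: "real vec \<Rightarrow> nat \<Rightarrow> bool \<Rightarrow> complex" where
  "code_factor \<theta> j b = (if b then \<i> * of_real (sin (\<theta> $ j)) else of_real (cos (\<theta> $ j)))"

text \<open>Amplitudes of the logical state \<open>|s\<^sub>L\<rangle>\<close>: \<open>|1\<^sub>L\<rangle>\<close> is \<open>|0\<^sub>L\<rangle>\<close> with every qubit flipped.\<close>

definition code_amp :: "bool \<Rightarrow> nat \<Rightarrow> real vec \<Rightarrow> nat \<Rightarrow> complex" where
  "code_amp s N \<theta> x = (\<Prod>j<N. code_factor \<theta> j (qbit x j \<noteq> s))"

lemma ket0L_code_amp: "ket0L N \<theta> = vec (2^N) (code_amp False N \<theta>)"
  unfolding ket0L_def code_amp_def code_factor_def by simp

lemma ket1L_code_amp: "ket1L N \<theta> = vec (2^N) (code_amp True N \<theta>)"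
proof (rule eq_vecI)
  fix x
  assume "x < dim_vec (vec (2^N) (code_amp True N \<theta>))"
  then have x: "x < 2^N" by simp
  have "ket1L N \<theta> $ x
      = (\<Sum>y\<in>{0..<2^N}. (if \<forall>j<N. qbit x j \<noteq> qbit y j then 1 else 0) * code_amp False N \<theta> y)"
    unfolding ket1L_def ket0L_code_amp using x by (simp add: mult_mat_vec_def scalar_prod_def Xall_def)
  also have "\<dots> = (\<Sum>y<2^N. if y = qbit_complement N x then code_amp False N \<theta> y else 0)"
    unfolding lessThan_atLeast0 by (rule sum.cong) (use Xall_entry_iff[OF x] in auto)
  also have "\<dots> = code_amp False N \<theta> (qbit_complement N x)"
    using qbit_complement_less[OF x] by simp
  also have "\<dots> = code_amp True N \<theta> x"
    unfolding code_amp_def using qbit_qbit_complement[OF x] by (intro prod.cong) auto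
  finally show "ket1L N \<theta> $ x = vec (2^N) (code_amp True N \<theta>) $ x"
    using x by simp
qed (simp add: ket1L_def Xall_def)

lemma codeP_outer:
  "codeP N \<theta> = outer (2^N) (code_amp False N \<theta>) (code_amp False N \<theta>)
             + outer (2^N) (code_amp True N \<theta>) (code_amp True N \<theta>)"
  unfolding codeP_def ket0L_code_amp ket1L_code_amp ketbra_vec ..

lemma codeZL_outer:
  "codeZL N \<theta> = outer (2^N) (code_amp False N \<theta>) (code_amp False N \<theta>)
              - outer (2^N) (code_amp True N \<theta>) (code_amp True N \<theta>)"
  unfolding codeZL_def ket0L_code_amp ket1L_code_amp ketbra_vec ..

lemma codeP_carrier: "codeP N \<theta> \<in> carrier_mat (2^N) (2^N)"
  by (simp add: codeP_outer)

lemma braket_code_amp_product: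
  "braket_diag (2^N) (code_amp s N \<theta>) (\<lambda>x. \<Prod>j<N. e j (qbit x j)) (code_amp s' N \<theta>)
   = (\<Prod>j<N. cnj (code_factor \<theta> j s) * of_real (e j False) * code_factor \<theta> j s'
             + cnj (code_factor \<theta> j (\<not> s)) * of_real (e j True) * code_factor \<theta> j (\<not> s'))"
  unfolding code_amp_def[abs_def]
  using braket_diag_product[of N "\<lambda>j b. code_factor \<theta> j (b \<noteq> s)" e "\<lambda>j b. code_factor \<theta> j (b \<noteq> s')"]
  by simp

lemma braket_code_qubit_sign_as_product:
  assumes "K \<subseteq> {..<N}"
  shows "braket_diag (2^N) (code_amp s N \<theta>) (qubit_sign K) (code_amp s' N \<theta>)
   = (\<Prod>j<N. cnj (code_factor \<theta> j s) * code_factor \<theta> j s'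
             + cnj (code_factor \<theta> j (\<not> s)) * of_real (if j \<in> K then -1 else 1) * code_factor \<theta> j (\<not> s'))"
  unfolding qubit_sign_lessThan[OF assms, abs_def]
  using braket_code_amp_product[where e = "\<lambda>j b. if j \<in> K \<and> b then -1 else 1"]
  by simp

lemma braket_code_qubit_sign:
  assumes "K \<subseteq> {..<N}"
  shows "braket_diag (2^N) (code_amp s N \<theta>) (qubit_sign K) (code_amp s N \<theta>)
       = (\<Prod>j\<in>K. if s then - cos (2 * \<theta> $ j) else cos (2 * \<theta> $ j))"
proof -
  have "braket_diag (2^N) (code_amp s N \<theta>) (qubit_sign K) (code_amp s N \<theta>)
      = (\<Prod>j<N. of_real (if j \<in> K then (if s then - cos (2 * \<theta> $ j) else cos (2 * \<theta> $ j)) else 1))"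
    unfolding braket_code_qubit_sign_as_product[OF assms]
    by (rule prod.cong)
      (auto simp: code_factor_def complex_eq_iff cos_double power2_eq_square sin_cos_squared_add[unfolded power2_eq_square])
  also have "\<dots> = (\<Prod>j\<in>K. if s then - cos (2 * \<theta> $ j) else cos (2 * \<theta> $ j))"
    using assms by (simp add: prod.If_cases Int_absorb1 flip: of_real_prod)
  finally show ?thesis .
qed

text \<open>A qubit \<open>j \<notin> K\<close> contributes the factor \<open>cos \<theta>\<^sub>j \<cdot> i sin \<theta>\<^sub>j + (-i sin \<theta>\<^sub>j) \<cdot> cos \<theta>\<^sub>j = 0\<close>.
  Since \<open>Z\<^sub>kZ\<^sub>l\<close> acts on at most two qubits, this is where \<open>N \<ge> 3\<close> is needed.\<close>

lemma braket_code_qubit_sign_offdiag: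
  assumes "K \<subseteq> {..<N}" "j < N" "j \<notin> K" "s \<noteq> s'"
  shows "braket_diag (2^N) (code_amp s N \<theta>) (qubit_sign K) (code_amp s' N \<theta>) = 0"
  unfolding braket_code_qubit_sign_as_product[OF assms(1)] using assms(2-4)
  by (auto simp: prod_zero_iff code_factor_def intro!: bexI[of _ j])

lemma braket_code1_qubit_sign:
  assumes "K \<subseteq> {..<N}" "even (card K)"
  shows "braket_diag (2^N) (code_amp True N \<theta>) (qubit_sign K) (code_amp True N \<theta>)
       = braket_diag (2^N) (code_amp False N \<theta>) (qubit_sign K) (code_amp False N \<theta>)"
proof -
  have "(\<Prod>j\<in>K. - cos (2 * \<theta> $ j)) = (- 1) ^ card K * (\<Prod>j\<in>K. cos (2 * \<theta> $ j))"
    using prod.distrib[of "\<lambda>_. - 1" "\<lambda>j. cos (2 * \<theta> $ j)" K] by simp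
  then show ?thesis
    using assms by (simp add: braket_code_qubit_sign)
qed

lemma code_amp_orthonormal:
  assumes "1 \<le> N"
  shows "braket_diag (2^N) (code_amp s N \<theta>) (\<lambda>_. 1) (code_amp s' N \<theta>) = (if s = s' then 1 else 0)"
proof -
  have "(\<lambda>_. 1) = qubit_sign {}"
    by (rule ext) (simp add: qubit_sign_def)
  then show ?thesis
    using braket_code_qubit_sign[of "{}" N s \<theta>]
      braket_code_qubit_sign_offdiag[of "{}" N 0 s s' \<theta>] assms
    by auto
qed

lemma braket_code_zsum:
  "braket_diag (2^N) (code_amp s N \<theta>) (zsum N w) (code_amp s N \<theta>)
   = of_real ((if s then - 1 else 1) * (\<Sum>k<N. w k * cos (2 * \<theta> $ k)))"
  unfolding zsum_def braket_diag_sum braket_diag_scale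
  by (simp add: braket_code_qubit_sign sum_distrib_left)

lemma braket_code_zsum_offdiag:
  assumes "2 \<le> N" "s \<noteq> s'"
  shows "braket_diag (2^N) (code_amp s N \<theta>) (zsum N w) (code_amp s' N \<theta>) = 0"
  unfolding zsum_def braket_diag_sum braket_diag_scale
proof (intro sum.neutral ballI)
  fix k :: nat
  assume k: "k \<in> {..<N}"
  define j :: nat where "j = (if k = 0 then 1 else 0)"
  have "j < N" "j \<noteq> k"
    using assms(1) by (auto simp: j_def)
  then show "of_real (w k) * braket_diag (2^N) (code_amp s N \<theta>) (qubit_sign {k}) (code_amp s' N \<theta>) = 0"
    using braket_code_qubit_sign_offdiag[of "{k}" N j s s'] assms k by simp
qed

lemma braket_code_zsum_mult_offdiag:
  assumes "3 \<le> N" "s \<noteq> s'"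
  shows "braket_diag (2^N) (code_amp s N \<theta>) (\<lambda>x. zsum N w x * zsum N w' x) (code_amp s' N \<theta>) = 0"
  unfolding zsum_mult braket_diag_sum braket_diag_scale
proof (intro sum.neutral ballI)
  fix k l :: nat
  assume "k \<in> {..<N}" "l \<in> {..<N}"
  moreover have "\<exists>j\<in>{0, 1, 2::nat}. j \<noteq> k \<and> j \<noteq> l" by auto
  then obtain j where "j \<in> {0, 1, 2}" "j \<noteq> k" "j \<noteq> l" by blast
  moreover from this(1) have "j < N" using assms(1) by auto
  ultimately show "of_real (w k * w' l) * braket_diag (2^N) (code_amp s N \<theta>)
      (qubit_sign (if k = l then {} else {k, l})) (code_amp s' N \<theta>) = 0"
    using braket_code_qubit_sign_offdiag[of "if k = l then {} else {k, l}" N j s s' \<theta>] assms(2)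
    by simp
qed

lemma braket_code1_zsum_mult:
  "braket_diag (2^N) (code_amp True N \<theta>) (\<lambda>x. zsum N w x * zsum N w' x) (code_amp True N \<theta>)
   = braket_diag (2^N) (code_amp False N \<theta>) (\<lambda>x. zsum N w x * zsum N w' x) (code_amp False N \<theta>)"
  unfolding zsum_mult braket_diag_sum braket_diag_scale
  by (intro sum.cong refl arg_cong[where f = "\<lambda>z. _ * z"] braket_code1_qubit_sign) auto

lemma codeP_real_diag_codeP:
  assumes "braket_diag (2^N) (code_amp False N \<theta>) f (code_amp True N \<theta>) = 0"
    and "braket_diag (2^N) (code_amp True N \<theta>) f (code_amp False N \<theta>) = 0"
  shows "codeP N \<theta> * real_diag (2^N) f * codeP N \<theta>
    = braket_diag (2^N) (code_amp False N \<theta>) f (code_amp False N \<theta>) \<cdot>\<^sub>m outer (2^N) (code_amp False N \<theta>) (code_amp False N \<theta>)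
    + braket_diag (2^N) (code_amp True N \<theta>) f (code_amp True N \<theta>) \<cdot>\<^sub>m outer (2^N) (code_amp True N \<theta>) (code_amp True N \<theta>)"
  unfolding codeP_outer outer_sum_real_diag_outer_sum assms
  by (rule eq_matI) auto

lemma scalar_sandwich_codeP_real_diag:
  assumes "braket_diag (2^N) (code_amp False N \<theta>) f (code_amp True N \<theta>) = 0"
    and "braket_diag (2^N) (code_amp True N \<theta>) f (code_amp False N \<theta>) = 0"
    and "braket_diag (2^N) (code_amp True N \<theta>) f (code_amp True N \<theta>)
       = braket_diag (2^N) (code_amp False N \<theta>) f (code_amp False N \<theta>)"
  shows "scalar_sandwich (codeP N \<theta>) (real_diag (2^N) f)"
proof -
  obtain r where r: "braket_diag (2^N) (code_amp False N \<theta>) f (code_amp False N \<theta>) = of_real r"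
    using braket_diag_self by blast
  have "codeP N \<theta> * real_diag (2^N) f * codeP N \<theta>
      = of_real r \<cdot>\<^sub>m outer (2^N) (code_amp False N \<theta>) (code_amp False N \<theta>)
      + of_real r \<cdot>\<^sub>m outer (2^N) (code_amp True N \<theta>) (code_amp True N \<theta>)"
    unfolding codeP_real_diag_codeP[OF assms(1,2)] assms(3) r ..
  also have "\<dots> = of_real r \<cdot>\<^sub>m codeP N \<theta>"
    unfolding codeP_outer by (rule eq_matI) (auto simp: algebra_simps)
  finally show ?thesis
    unfolding scalar_sandwich_def by blast
qed

lemma codeP_lindblad_span:
  assumes N: "3 \<le> N"
    and orth: "\<And>i. i < N \<Longrightarrow> (\<Sum>k<N. w i k * cos (2 * \<theta> $ k)) = 0"
    and S: "S \<in> lindblad_span N (\<lambda>i. real_diag (2^N) (zsum N (w i)))"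
  shows "scalar_sandwich (codeP N \<theta>) S"
proof (rule lindblad_span_scalar_sandwich[OF codeP_carrier _ _ _ _ S])
  show "scalar_sandwich (codeP N \<theta>) (1\<^sub>m (2^N))"
    unfolding one_mat_real_diag using N
    by (intro scalar_sandwich_codeP_real_diag) (simp_all add: code_amp_orthonormal)
  show "scalar_sandwich (codeP N \<theta>) (real_diag (2^N) (zsum N (w i)))" if "i < N" for i
    using N orth[OF that]
    by (intro scalar_sandwich_codeP_real_diag) (simp_all add: braket_code_zsum_offdiag braket_code_zsum)
  show "scalar_sandwich (codeP N \<theta>) (real_diag (2^N) (zsum N (w i)) * real_diag (2^N) (zsum N (w j)))"
    for i j
    unfolding real_diag_mult using N
    by (intro scalar_sandwich_codeP_real_diag)
      (simp_all add: braket_code_zsum_mult_offdiag braket_code1_zsum_mult)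
qed simp

lemma codeP_zsum_codeP:
  assumes "2 \<le> N"
  shows "codeP N \<theta> * real_diag (2^N) (zsum N w) * codeP N \<theta>
       = of_real (\<Sum>k<N. w k * cos (2 * \<theta> $ k)) \<cdot>\<^sub>m codeZL N \<theta>"
proof -
  have off: "braket_diag (2^N) (code_amp False N \<theta>) (zsum N w) (code_amp True N \<theta>) = 0"
    "braket_diag (2^N) (code_amp True N \<theta>) (zsum N w) (code_amp False N \<theta>) = 0"
    using braket_code_zsum_offdiag[OF assms(1), where s = False and s' = True]
      braket_code_zsum_offdiag[OF assms(1), where s = True and s' = False]
    by simp_all
  show ?thesis
    unfolding codeP_real_diag_codeP[OF off] braket_code_zsum codeZL_outer
    by (rule eq_matI) (auto simp: algebra_simps)
qed

lemma smult_codeZL_neq_smult_codeP: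
  assumes "1 \<le> N" "c \<noteq> 0"
  shows "c \<cdot>\<^sub>m codeZL N \<theta> \<noteq> c' \<cdot>\<^sub>m codeP N \<theta>"
proof
  assume eq: "c \<cdot>\<^sub>m codeZL N \<theta> = c' \<cdot>\<^sub>m codeP N \<theta>"
  let ?a = "\<lambda>s. code_amp s N \<theta>"
  let ?Q = "\<lambda>u M. \<Sum>x<2^N. \<Sum>y<2^N. cnj (u x) * M $$ (x, y) * u y"
  have ZL: "c \<cdot>\<^sub>m codeZL N \<theta> = c \<cdot>\<^sub>m outer (2^N) (?a False) (?a False) + (- c) \<cdot>\<^sub>m outer (2^N) (?a True) (?a True)"
    unfolding codeZL_outer by (rule eq_matI) (auto simp: algebra_simps)
  have P: "c' \<cdot>\<^sub>m codeP N \<theta> = c' \<cdot>\<^sub>m outer (2^N) (?a False) (?a False) + c' \<cdot>\<^sub>m outer (2^N) (?a True) (?a True)"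
    unfolding codeP_outer by (rule eq_matI) (auto simp: algebra_simps)
  have "c = c'"
    using arg_cong[OF eq, of "?Q (?a False)"]
    unfolding ZL P quadratic_form_outer code_amp_orthonormal[OF assms(1)] by simp
  moreover have "- c = c'"
    using arg_cong[OF eq, of "?Q (?a True)"]
    unfolding ZL P quadratic_form_outer code_amp_orthonormal[OF assms(1)] by simp
  ultimately show False
    using assms(2) by simp
qed

section \<open>The kernel of the correlation matrix\<close>

lemma is_orth_proj_kernel:
  fixes C :: "real mat"
  assumes "C \<in> carrier_mat N N" "is_orth_proj (mat_kernel C) h p" "h \<in> carrier_vec N"
  shows "p \<in> mat_kernel C" "p \<in> carrier_vec N" "h \<bullet> p = p \<bullet> p"
  using assms mat_kernelD[OF assms(1)] minus_scalar_prod_distrib[OF assms(3), of p p]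
  unfolding is_orth_proj_def by auto

lemma symmetric_kernel_orth_image:
  fixes C :: "real mat"
  assumes "C \<in> carrier_mat N N" "C\<^sup>T = C" "p \<in> mat_kernel C" "x \<in> carrier_vec N"
  shows "p \<bullet> (C *\<^sub>v x) = 0"
  using transpose_vec_mult_scalar[OF assms(1,4), of p] mat_kernelD[OF assms(1,3)] assms(2,4)
  by simp

lemma eigenvector_weights_orth_kernel:
  fixes C :: "real mat"
  assumes C: "C \<in> carrier_mat N N" "C\<^sup>T = C" and p: "p \<in> mat_kernel C"
    and v: "v \<in> carrier_vec N" "C *\<^sub>v v = c \<cdot>\<^sub>v v"
  shows "(\<Sum>k<N. sqrt c * v $ k * (\<gamma> * p $ k)) = 0"
proof -
  have pN: "p \<in> carrier_vec N"
    using mat_kernelD[OF C(1) p] by simp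
  have "c * (v \<bullet> p) = 0"
    using symmetric_kernel_orth_image[OF C p v(1)] v pN by (simp add: comm_scalar_prod[of v N p])
  then have "sqrt c * (v \<bullet> p) = 0"
    by auto
  moreover have "(\<Sum>k<N. sqrt c * v $ k * (\<gamma> * p $ k)) = \<gamma> * (sqrt c * (v \<bullet> p))"
    using pN by (simp add: scalar_prod_def lessThan_atLeast0 sum_distrib_left mult_ac)
  ultimately show ?thesis
    by simp
qed

lemma symmetric_orth_colspace_imp_kernel:
  fixes C :: "real mat"
  assumes C: "C \<in> carrier_mat N N" "C\<^sup>T = C" and b: "b \<in> carrier_vec N"
    and orth: "\<forall>w\<in>colspace C. b \<bullet> w = 0"
  shows "b \<in> mat_kernel C"
proof -
  have Cb: "C *\<^sub>v b \<in> carrier_vec N"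
    using C b by simp
  have "b \<bullet> (C *\<^sub>v (C *\<^sub>v b)) = 0"
    using orth Cb C unfolding colspace_def by auto
  then have "(C *\<^sub>v b) \<bullet> (C *\<^sub>v b) = 0"
    using transpose_vec_mult_scalar[OF C(1) Cb b] C(2) by simp
  then have "C *\<^sub>v b = 0\<^sub>v N"
    using conjugate_square_eq_0_vec[OF Cb] by simp
  then show ?thesis
    using C b by (intro mat_kernelI) auto
qed

lemma kernel_dim_1_multiple:
  fixes C :: "real mat"
  assumes C: "C \<in> carrier_mat N N" and dim: "kernel_dim C = 1"
    and p: "p \<in> mat_kernel C" "p \<noteq> 0\<^sub>v N" and b: "b \<in> mat_kernel C"
  shows "\<exists>t. b = t \<cdot>\<^sub>v p"
proof -
  interpret kernel N N C by (unfold_locales, rule C)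
  obtain B where B: "finite B" "basis B"
    using kernel_basis_exists[OF C] by auto
  have "card B = 1"
    using Ker.dim_basis[OF B] dim by simp
  then obtain u where B_eq: "B = {u}"
    using card_1_singletonE by blast
  have span: "span {u} = mat_kernel C" and u: "u \<in> mat_kernel C"
    using B(2) unfolding B_eq Ker.basis_def by auto
  have multiple_u: "\<exists>a. x = a \<cdot>\<^sub>v u" if x: "x \<in> mat_kernel C" for x
  proof -
    obtain a where "lincomb a {u} = x"
      using Ker.finite_in_span[of "{u}" x] x span u by auto
    then show ?thesis
      unfolding Ker.lincomb_def using u mat_kernel_carrier[OF C] by auto
  qed
  obtain a c where a: "p = a \<cdot>\<^sub>v u" and c: "b = c \<cdot>\<^sub>v u"
    using multiple_u p(1) b by meson
  have "a \<noteq> 0"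
    using a p(2) u mat_kernel_carrier[OF C] by auto
  then have "b = (c / a) \<cdot>\<^sub>v p"
    unfolding a c by (simp add: smult_smult_assoc)
  then show ?thesis by blast
qed

lemma linf_norm_ge: "i < dim_vec p \<Longrightarrow> \<bar>p $ i\<bar> \<le> linf_norm p"
  unfolding linf_norm_def by (intro Max_ge) auto

lemma linf_norm_attained:
  assumes "0 < dim_vec p"
  obtains i where "i < dim_vec p" "\<bar>p $ i\<bar> = linf_norm p"
proof -
  have "linf_norm p \<in> (\<lambda>i. \<bar>p $ i\<bar>) ` {0..<dim_vec p}"
    unfolding linf_norm_def using assms by (intro Max_in) auto
  then show ?thesis using that by auto
qed

text \<open>No positivity of \<open>linf_norm p\<close> is needed: if it vanishes, then \<open>1 / 0 = 0\<close> forces \<open>\<gamma> = 0\<close>.\<close>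

lemma abs_smult_linf_le_1:
  assumes "\<bar>\<gamma>\<bar> \<le> 1 / linf_norm p" "i < dim_vec p"
  shows "\<bar>(\<gamma> \<cdot>\<^sub>v p) $ i\<bar> \<le> 1"
proof (cases "linf_norm p = 0")
  case True
  then show ?thesis using assms by simp
next
  case False
  have "\<bar>(\<gamma> \<cdot>\<^sub>v p) $ i\<bar> = \<bar>\<gamma>\<bar> * \<bar>p $ i\<bar>"
    using assms(2) by (simp add: abs_mult)
  also have "\<dots> \<le> 1 / linf_norm p * linf_norm p"
    using assms linf_norm_ge[OF assms(2)] by (intro mult_mono) auto
  finally show ?thesis
    using False by simp
qed

lemma linf_norm_bound_scalar_prod_pos:
  fixes p :: "real vec"
  assumes "0 < \<bar>\<gamma>\<bar>" "\<bar>\<gamma>\<bar> \<le> 1 / linf_norm p" "0 < dim_vec p"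
  shows "0 < p \<bullet> p"
proof -
  obtain i where i: "i < dim_vec p" "\<bar>p $ i\<bar> = linf_norm p"
    using linf_norm_attained[OF assms(3)] by blast
  have "0 < 1 / linf_norm p"
    using assms(1,2) by linarith
  then have "p $ i \<noteq> 0"
    using i(2) by auto
  then have "p \<noteq> 0\<^sub>v (dim_vec p)"
    using i(1) by (metis index_zero_vec(1))
  then show ?thesis
    using conjugate_square_eq_0_vec[of p "dim_vec p"] conjugate_square_ge_0_vec[of p]
    by (simp add: le_less)
qed

lemma kernel_dim_1_linf_optimum:
  fixes C :: "real mat"
  assumes C: "C \<in> carrier_mat N N" "C\<^sup>T = C" "kernel_dim C = 1"
    and p: "p \<in> mat_kernel C" "p \<noteq> 0\<^sub>v N" and h: "h \<in> carrier_vec N" "h \<bullet> p = p \<bullet> p"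
    and b: "b \<in> carrier_vec N" "\<forall>i<N. \<bar>b $ i\<bar> \<le> 1" "\<forall>w\<in>colspace C. b \<bullet> w = 0"
  shows "b \<bullet> h \<le> ((1 / linf_norm p) \<cdot>\<^sub>v p) \<bullet> h"
proof -
  have pN: "p \<in> carrier_vec N"
    using mat_kernelD[OF C(1) p(1)] by simp
  obtain t where t: "b = t \<cdot>\<^sub>v p"
    using kernel_dim_1_multiple[OF C(1,3) p symmetric_orth_colspace_imp_kernel[OF C(1,2) b(1,3)]] by blast
  have "0 < N"
    using p(2) pN by (cases N) auto
  then obtain i where i: "i < N" "\<bar>p $ i\<bar> = linf_norm p"
    using linf_norm_attained[of p] pN by auto
  have "linf_norm p \<noteq> 0"
    using p(2) pN linf_norm_ge[of _ p] i by (auto intro!: eq_vecI)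
  then have m: "0 < linf_norm p"
    using i(2) by auto
  have "\<bar>t\<bar> * linf_norm p \<le> 1"
    using b(2) i pN by (auto simp: t abs_mult simp flip: i(2))
  then have "\<bar>t\<bar> \<le> 1 / linf_norm p"
    using m by (simp add: pos_le_divide_eq)
  then have "t \<le> 1 / linf_norm p"
    by (meson abs_ge_self order_trans)
  moreover have "0 \<le> p \<bullet> p"
    using conjugate_square_ge_0_vec[of p] by simp
  ultimately have "t * (p \<bullet> p) \<le> 1 / linf_norm p * (p \<bullet> p)"
    by (rule mult_right_mono)
  then show ?thesis
    using pN h by (simp add: t comm_scalar_prod[of h N p])
qed

theorem mainTheorem6:
  fixes N :: nat and h :: "real vec" and C :: "real mat"
    and v :: "nat \<Rightarrow> real vec" and lam :: "nat \<Rightarrow> real"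
    and p :: "real vec" and \<gamma> :: real
  assumes N3: "N \<ge> 3"
    and h_dim: "h \<in> carrier_vec N"
    and C_dim: "C \<in> carrier_mat N N"
    and C_sym: "C\<^sup>T = C"
    and C_psd: "\<forall>x\<in>carrier_vec N. x \<bullet> (C *\<^sub>v x) \<ge> 0"
    and v_dim: "\<forall>i<N. v i \<in> carrier_vec N"
    and v_orthonormal: "\<forall>i<N. \<forall>j<N. v i \<bullet> v j = (if i = j then 1 else 0)"
    and v_eigen: "\<forall>i<N. C *\<^sub>v v i = lam i \<cdot>\<^sub>v v i"
    and lam_nonneg: "\<forall>i<N. lam i \<ge> 0"
    and h_notin_col: "h \<notin> colspace C"
    and p_proj: "is_orth_proj (mat_kernel C) h p"
    and \<gamma>_range: "0 < \<bar>\<gamma>\<bar>" "\<bar>\<gamma>\<bar> \<le> 1 / linf_norm p"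
  defines "bt \<equiv> \<gamma> \<cdot>\<^sub>v p"
    and "\<theta> \<equiv> vec N (\<lambda>j. arccos ((\<gamma> \<cdot>\<^sub>v p) $ j) / 2)"
    and "H \<equiv> complex_of_real (1/2) \<cdot>\<^sub>m dotZ N h"
    and "L \<equiv> (\<lambda>j. complex_of_real (sqrt (lam j)) \<cdot>\<^sub>m dotZ N (v j))"
    and "P \<equiv> codeP N (vec N (\<lambda>j. arccos ((\<gamma> \<cdot>\<^sub>v p) $ j) / 2))"
  shows "(\<forall>S\<in>lindblad_span N L. \<exists>r::real. P * S * P = complex_of_real r \<cdot>\<^sub>m P)
       \<and> P * H * P = complex_of_real (\<gamma> / 2 * (p \<bullet> p)) \<cdot>\<^sub>m codeZL N \<theta>
       \<and> \<not> (\<exists>c::complex. P * H * P = c \<cdot>\<^sub>m P)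
       \<and> ((kernel_dim C = 1 \<and> \<gamma> = 1 / linf_norm p) \<longrightarrow>
            ((\<forall>i<N. \<bar>bt $ i\<bar> \<le> 1) \<and> (\<forall>w\<in>colspace C. bt \<bullet> w = 0)
             \<and> (\<forall>b\<in>carrier_vec N. (\<forall>i<N. \<bar>b $ i\<bar> \<le> 1) \<and> (\<forall>w\<in>colspace C. b \<bullet> w = 0)
                    \<longrightarrow> b \<bullet> h \<le> bt \<bullet> h)))"
proof -
  have pK: "p \<in> mat_kernel C" and pN: "p \<in> carrier_vec N" and hp: "h \<bullet> p = p \<bullet> p"
    using is_orth_proj_kernel[OF C_dim p_proj h_dim] by auto
  have pp: "0 < p \<bullet> p"
    using linf_norm_bound_scalar_prod_pos[OF \<gamma>_range] pN N3 by simp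
  then have p0: "p \<noteq> 0\<^sub>v N"
    by auto
  have bt_bound: "\<forall>j<N. \<bar>bt $ j\<bar> \<le> 1"
    using abs_smult_linf_le_1[OF \<gamma>_range(2)] pN unfolding bt_def by simp
  have weights: "(\<Sum>k<N. f k * cos (2 * \<theta> $ k)) = (\<Sum>k<N. f k * (\<gamma> * p $ k))" for f
    using bt_bound pN by (intro sum.cong) (simp_all add: \<theta>_def bt_def cos_arccos_abs)
  have P_eq: "P = codeP N \<theta>"
    unfolding P_def \<theta>_def ..
  have orth: "(\<Sum>k<N. sqrt (lam i) * v i $ k * cos (2 * \<theta> $ k)) = 0" if "i < N" for i
    unfolding weights using eigenvector_weights_orth_kernel[OF C_dim C_sym pK] v_dim v_eigen that by blast
  have h_weights: "(\<Sum>k<N. 1 / 2 * h $ k * cos (2 * \<theta> $ k)) = \<gamma> / 2 * (p \<bullet> p)"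
    unfolding weights hp[symmetric] using pN
    by (simp add: scalar_prod_def lessThan_atLeast0 sum_distrib_left mult_ac)
  have "2 \<le> N"
    using N3 by simp
  then have PHP: "P * H * P = of_real (\<gamma> / 2 * (p \<bullet> p)) \<cdot>\<^sub>m codeZL N \<theta>"
    unfolding P_eq H_def smult_dotZ by (simp only: codeP_zsum_codeP h_weights)
  show ?thesis
  proof (intro conjI impI)
    show "\<forall>S\<in>lindblad_span N L. \<exists>r::real. P * S * P = of_real r \<cdot>\<^sub>m P"
      using codeP_lindblad_span[OF N3, of "\<lambda>i k. sqrt (lam i) * v i $ k" \<theta>] orth
      unfolding L_def smult_dotZ P_eq scalar_sandwich_def by blast
    show "\<not> (\<exists>c. P * H * P = c \<cdot>\<^sub>m P)"
      unfolding PHP using smult_codeZL_neq_smult_codeP[of N] N3 pp \<gamma>_range(1) by (auto simp: P_eq)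
    assume "kernel_dim C = 1 \<and> \<gamma> = 1 / linf_norm p"
    then show "\<forall>b\<in>carrier_vec N. (\<forall>i<N. \<bar>b $ i\<bar> \<le> 1) \<and> (\<forall>w\<in>colspace C. b \<bullet> w = 0)
        \<longrightarrow> b \<bullet> h \<le> bt \<bullet> h"
      using kernel_dim_1_linf_optimum[OF C_dim C_sym _ pK p0 h_dim hp] unfolding bt_def by auto
    show "\<forall>w\<in>colspace C. bt \<bullet> w = 0"
      using symmetric_kernel_orth_image[OF C_dim C_sym pK] pN C_dim unfolding bt_def colspace_def by auto
  qed (use PHP bt_bound in auto)
qed

end
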